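(* Let $A,B\in\mathcal{F}_k$ be commonly ordered configurations of $k$ robots. There exists a feasible schedule from $A$ to $B$ with makespan $d(A,B)$ in which each robot makes at most one turn.
   Context: Robots are axis-parallel unit squares: a robot at $p$ occupies $p+\boxdot$, $\boxdot=\{q:\|q\|_\infty\le1/2\}$. Distances use the $L_1$ norm $\|p\|=|x(p)|+|y(p)|$. A configuration of $k$ robots is a tuple $(p_1,\dots,p_k)$ with $\|p_i-p_j\|_\infty\ge 1$ for $i\ne j$; $\mathcal{F}_k$ is their set. A trajectory from $a$ to $b$ over $T=[t_0,t_1]$ is a $1$-Lipschitz (w.r.t. $L_1$) map $m:T\to\mathbb{R}^2$, $m(t_0)=a$, $m(t_1)=b$, whose image is a polygonal chain; a turn is a point of the image where two segments of different orientations meet. A schedule $M=(m_1,\dots,m_k)$ over $T$ is feasible if $M(t)\in\mathcal{F}_k$ for all $t$; its makespan is $t_1-t_0$. The diameter is $d(A,B)=\max_i\|a_i-b_i\|$. An ordering of $k$ robots assigns to each pair $i<j$ one of the four relations $x(p_i)\ge x(p_j)+1$, $x(p_j)\ge x(p_i)+1$, $y(p_i)\ge y(p_j)+1$, $y(p_j)\ge y(p_i)+1$; a configuration lies in the ordering if it satisfies all the assigned relations. Two configurations are commonly ordered if they lie in a common ordering. *)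

theory Defs
  imports "HOL-Analysis.Analysis"
begin

type_synonym point = "real \<times> real"

definition l1 :: "point \<Rightarrow> real" where
  "l1 p = \<bar>fst p\<bar> + \<bar>snd p\<bar>"

definition linf :: "point \<Rightarrow> real" where
  "linf p = max \<bar>fst p\<bar> \<bar>snd p\<bar>"

text \<open>Configurations of k robots: maps from indices {0..<k} to points
  (values at indices \<ge> k are irrelevant).\<close>
definition config :: "nat \<Rightarrow> (nat \<Rightarrow> point) \<Rightarrow> bool" where
  "config k P \<longleftrightarrow> (\<forall>i<k. \<forall>j<k. i \<noteq> j \<longrightarrow> linf (P i - P j) \<ge> 1)"

definition diam :: "nat \<Rightarrow> (nat \<Rightarrow> point) \<Rightarrow> (nat \<Rightarrow> point) \<Rightarrow> real" where
  "diam k A B = Max (insert 0 {l1 (A i - B i) | i. i < k})"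

datatype rel = XGe | XLe | YGe | YLe

fun rel_holds :: "rel \<Rightarrow> point \<Rightarrow> point \<Rightarrow> bool" where
  "rel_holds XGe p q \<longleftrightarrow> fst p \<ge> fst q + 1"
| "rel_holds XLe p q \<longleftrightarrow> fst q \<ge> fst p + 1"
| "rel_holds YGe p q \<longleftrightarrow> snd p \<ge> snd q + 1"
| "rel_holds YLe p q \<longleftrightarrow> snd q \<ge> snd p + 1"

definition lies_in :: "nat \<Rightarrow> (nat \<Rightarrow> nat \<Rightarrow> rel) \<Rightarrow> (nat \<Rightarrow> point) \<Rightarrow> bool" where
  "lies_in k ord P \<longleftrightarrow> (\<forall>i j. i < j \<and> j < k \<longrightarrow> rel_holds (ord i j) (P i) (P j))"

definition commonly_ordered :: "nat \<Rightarrow> (nat \<Rightarrow> point) \<Rightarrow> (nat \<Rightarrow> point) \<Rightarrow> bool" where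
  "commonly_ordered k A B \<longleftrightarrow> (\<exists>ord. lies_in k ord A \<and> lies_in k ord B)"

definition traj_one_turn :: "real \<Rightarrow> real \<Rightarrow> (real \<Rightarrow> point) \<Rightarrow> point \<Rightarrow> point \<Rightarrow> bool" where
  "traj_one_turn t0 t1 m a b \<longleftrightarrow>
     m t0 = a \<and> m t1 = b \<and>
     (\<forall>s\<in>{t0..t1}. \<forall>t\<in>{t0..t1}. l1 (m s - m t) \<le> \<bar>s - t\<bar>) \<and>
     (\<exists>c. m ` {t0..t1} = closed_segment a c \<union> closed_segment c b)"

definition feasible :: "nat \<Rightarrow> real \<Rightarrow> real \<Rightarrow> (nat \<Rightarrow> real \<Rightarrow> point) \<Rightarrow> bool" where
  "feasible k t0 t1 M \<longleftrightarrow> (\<forall>t\<in>{t0..t1}. config k (\<lambda>i. M i t))"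

end

theory Submission
  imports Defs
begin

text \<open>Both configurations satisfy the same pairwise constraints, and each constraint says
  that a fixed linear functional of the difference of two positions is at least 1. Such
  constraints survive convex combinations, so moving every robot along its straight segment
  at the common pace that makes all robots arrive at time d(A,B) keeps the configuration in
  the ordering, hence feasible, at all times. Straight trajectories make no turn at all, and
  none moves faster than 1 in L1, because no robot travels farther than d(A,B).\<close>

fun rel_margin :: "rel \<Rightarrow> point \<Rightarrow> real" where
  "rel_margin XGe v = fst v"
| "rel_margin XLe v = - fst v"
| "rel_margin YGe v = snd v"
| "rel_margin YLe v = - snd v"

lemma rel_holds_iff_margin: "rel_holds r p q \<longleftrightarrow> 1 \<le> rel_margin r (p - q)"
  by (cases r) auto

lemma rel_margin_convex:
  "rel_margin r ((1 - u) *\<^sub>R v + u *\<^sub>R w) = (1 - u) * rel_margin r v + u * rel_margin r w"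
  by (cases r) (auto simp: algebra_simps)

lemma rel_holds_convex:
  assumes "rel_holds r p q" "rel_holds r p' q'" "0 \<le> u" "u \<le> 1"
  shows "rel_holds r ((1 - u) *\<^sub>R p + u *\<^sub>R p') ((1 - u) *\<^sub>R q + u *\<^sub>R q')"
proof -
  have diff: "((1 - u) *\<^sub>R p + u *\<^sub>R p') - ((1 - u) *\<^sub>R q + u *\<^sub>R q')
      = (1 - u) *\<^sub>R (p - q) + u *\<^sub>R (p' - q')"
    by (simp add: algebra_simps)
  have "(1 - u) * 1 + u * 1 \<le> (1 - u) * rel_margin r (p - q) + u * rel_margin r (p' - q')"
    using assms by (intro add_mono mult_left_mono) (auto simp: rel_holds_iff_margin)
  then show ?thesis
    by (simp add: rel_holds_iff_margin diff rel_margin_convex)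
qed

lemma linf_ge_rel_margin: "rel_margin r v \<le> linf v"
  by (cases r) (auto simp: linf_def)

lemma linf_minus_commute: "linf (p - q) = linf (q - p)"
  by (simp add: linf_def abs_minus_commute)

lemma config_if_lies_in:
  assumes "lies_in k ord P"
  shows "config k P"
  unfolding config_def
proof (intro allI impI)
  have sep: "1 \<le> linf (P i - P j)" if "i < j" "j < k" for i j
  proof -
    have "1 \<le> rel_margin (ord i j) (P i - P j)"
      using assms that by (simp add: lies_in_def rel_holds_iff_margin)
    then show ?thesis
      using linf_ge_rel_margin order_trans by blast
  qed
  fix i j assume "i < k" "j < k" "i \<noteq> j"
  then show "1 \<le> linf (P i - P j)"
    using sep[of i j] sep[of j i] linf_minus_commute by (cases "i < j") auto
qed

lemma lies_in_convex:
  assumes "lies_in k ord A" "lies_in k ord B" "0 \<le> u" "u \<le> 1"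
  shows "lies_in k ord (\<lambda>i. (1 - u) *\<^sub>R A i + u *\<^sub>R B i)"
  using assms by (auto simp: lies_in_def intro: rel_holds_convex)

lemma l1_scaleR: "l1 (c *\<^sub>R v) = \<bar>c\<bar> * l1 v"
  by (simp add: l1_def abs_mult algebra_simps)

lemma l1_minus_commute: "l1 (p - q) = l1 (q - p)"
  by (simp add: l1_def abs_minus_commute)

lemma l1_nonpos_imp_zero: "l1 v \<le> 0 \<Longrightarrow> v = 0"
  by (auto simp: l1_def prod_eq_iff)

lemma finite_l1_diffs: "finite {l1 (A i - B i) | i :: nat. i < k}"
  unfolding setcompr_eq_image by (rule finite_imageI) simp

lemma l1_le_diam: "i < k \<Longrightarrow> l1 (A i - B i) \<le> diam k A B"
  unfolding diam_def using finite_l1_diffs by (intro Max_ge) auto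

lemma diam_nonneg: "0 \<le> diam k A B"
  unfolding diam_def using finite_l1_diffs by (intro Max_ge) auto

text \<open>For \<open>D = 0\<close> the motion is constant, since \<open>t / 0 = 0\<close>.\<close>
definition straight_motion :: "real \<Rightarrow> point \<Rightarrow> point \<Rightarrow> real \<Rightarrow> point" where
  "straight_motion D a b t = (1 - t / D) *\<^sub>R a + (t / D) *\<^sub>R b"

lemma straight_motion_diff:
  "straight_motion D a b s - straight_motion D a b t = ((s - t) / D) *\<^sub>R (b - a)"
  by (simp add: straight_motion_def algebra_simps diff_divide_distrib)

lemma straight_motion_image:
  assumes "0 < D"
  shows "straight_motion D a b ` {0..D} = closed_segment a b"
proof -
  have "(\<lambda>t. t / D) ` {0..D} = {0..1}"
    using assms by (auto simp: image_iff field_simps intro!: bexI[of _ "_ * D"])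
  moreover have "straight_motion D a b ` {0..D}
      = (\<lambda>u. (1 - u) *\<^sub>R a + u *\<^sub>R b) ` (\<lambda>t. t / D) ` {0..D}"
    unfolding image_image by (simp add: straight_motion_def[abs_def])
  ultimately show ?thesis
    by (simp add: closed_segment_image_interval)
qed

lemma traj_one_turn_straight_motion:
  assumes "0 \<le> D" "l1 (a - b) \<le> D"
  shows "traj_one_turn 0 D (straight_motion D a b) a b"
proof (cases "D = 0")
  case True
  then have "a = b" using assms by (auto dest: l1_nonpos_imp_zero)
  then show ?thesis
    using True unfolding traj_one_turn_def straight_motion_def
    by (intro conjI exI[of _ b]) (auto simp: l1_def)
next
  case False
  have "l1 (straight_motion D a b s - straight_motion D a b t) \<le> \<bar>s - t\<bar>" for s t
  proof -
    have "l1 (straight_motion D a b s - straight_motion D a b t) = \<bar>s - t\<bar> / D * l1 (a - b)"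
      using assms by (simp add: straight_motion_diff l1_scaleR l1_minus_commute)
    also have "\<dots> \<le> \<bar>s - t\<bar> / D * D"
      using assms by (intro mult_left_mono) auto
    finally show ?thesis
      using False by simp
  qed
  moreover have "straight_motion D a b ` {0..D} = closed_segment a a \<union> closed_segment a b"
    using assms False by (simp add: straight_motion_image insert_absorb)
  moreover have "straight_motion D a b 0 = a" "straight_motion D a b D = b"
    using False by (simp_all add: straight_motion_def)
  ultimately show ?thesis
    unfolding traj_one_turn_def by blast
qed

theorem lemma5p2:
  fixes k :: nat and A B :: "nat \<Rightarrow> point"
  assumes "config k A" and "config k B"
    and "commonly_ordered k A B"
  shows "\<exists>t0 t1 M. t1 - t0 = diam k A B \<and> feasible k t0 t1 M \<and>
           (\<forall>i<k. traj_one_turn t0 t1 (M i) (A i) (B i))"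
proof -
  define D where "D = diam k A B"
  define M where "M i = straight_motion D (A i) (B i)" for i
  obtain ord where ord: "lies_in k ord A" "lies_in k ord B"
    using assms(3) unfolding commonly_ordered_def by blast
  have "0 \<le> D"
    unfolding D_def by (rule diam_nonneg)
  have "feasible k 0 D M"
    unfolding feasible_def
  proof
    fix t assume "t \<in> {0..D}"
    then have "0 \<le> t / D" "t / D \<le> 1"
      by (auto simp: divide_le_eq_1)
    with ord have "lies_in k ord (\<lambda>i. M i t)"
      unfolding M_def straight_motion_def by (rule lies_in_convex)
    then show "config k (\<lambda>i. M i t)"
      by (rule config_if_lies_in)
  qed
  moreover have "traj_one_turn 0 D (M i) (A i) (B i)" if "i < k" for i
    unfolding M_def using \<open>0 \<le> D\<close> l1_le_diam[OF that]
    by (intro traj_one_turn_straight_motion) (simp_all add: D_def)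
  ultimately show ?thesis
    by (intro exI[of _ 0] exI[of _ D] exI[of _ M]) (simp add: D_def)
qed

end
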